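(* Let $\mathcal{F}$ be an argumentation framework and $S\subseteq A_{\mathcal{F}}$. Then $S\in\mathit{tfstg2}(\mathcal{F})$ if and only if $S$ is conflict-free and $S$ is a stage extension of $[[\mathcal{F}\setminus\Delta_{\mathcal{F},S}]]$.
   Context: An argumentation framework (AF) is $\mathcal{F}=(A_{\mathcal{F}},R_{\mathcal{F}})$ with $R_{\mathcal{F}}\subseteq A_{\mathcal{F}}\times A_{\mathcal{F}}$; $a\rightarrow b$ means $(a,b)\in R_{\mathcal{F}}$. $\mathcal{F}|_B=(A_{\mathcal{F}}\cap B,R_{\mathcal{F}}\cap(B\times B))$. Conflict-free: no $a,b\in S$ with $a\rightarrow b$; $S^\oplus=S\cup\{x:\exists y\in S,\ y\rightarrow x\}$; stage extension: conflict-free $S$ with no conflict-free $T$ such that $S^\oplus\subsetneq T^\oplus$. $\mathrm{SCC}(a)$: set of $b$ with directed attack paths (possibly length 0) from $a$ to $b$ and back. $D_S(X)=\{b\in X:\exists a\in S\setminus X,\ a\rightarrow b\}$. $\mathit{tfstg2}$: $C^0_S(a)=\mathrm{SCC}(a)$; $C^{\alpha+1}_S(a)$ = the strongly connected component of $a$ in $\mathcal{F}|_{C^\alpha_S(a)\setminus D_S(C^\alpha_S(a))}$ (empty if $a$ is not in that set); for limit $\lambda$, $C^\lambda_S(a)$ = the component of $a$ in $\mathcal{F}|_{\bigcap_{\alpha<\lambda}C^\alpha_S(a)}$; $\alpha_S(a)$ = least $\alpha$ with $a\notin C^\alpha_S(a)$ or $C^{\alpha+1}_S(a)=C^\alpha_S(a)$.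 $S\in\mathit{tfstg2}(\mathcal{F})$ iff $S$ is conflict-free and for each $a\in A_{\mathcal{F}}$, either $a\notin C^{\alpha_S(a)}_S(a)$ or $S\cap C^{\alpha_S(a)}_S(a)$ is a stage extension of $\mathcal{F}|_{C^{\alpha_S(a)}_S(a)}$. $a\Rightarrow^B_{\mathcal{F}}b$ means there is a directed attack path from $a$ to $b$ in $\mathcal{F}|_B$. For $D\subseteq A_{\mathcal{F}}$, $\Delta_{\mathcal{F},S}(D)=\{a\in A_{\mathcal{F}}:\exists b\in S\,(b\rightarrow a\text{ and not }a\Rightarrow^{A_{\mathcal{F}}\setminus D}_{\mathcal{F}}b)\}$. This operator is monotone; $\Delta_{\mathcal{F},S}$ (as a set) denotes its least fixed point. $\mathcal{F}\setminus\Delta$ denotes $\mathcal{F}|_{A_{\mathcal{F}}\setminus\Delta}$. For an AF $\mathcal{G}$, $[[\mathcal{G}]]$ is obtained by deleting all attacks between arguments in different strongly connected components of $\mathcal{G}$. *)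

theory Defs
  imports Main
begin

text \<open>An argumentation framework is a pair (arguments, attacks).
  Well-formedness (attacks within arguments) is assumed explicitly where needed.\<close>

type_synonym 'a af = "'a set \<times> ('a \<times> 'a) set"

definition args :: "'a af \<Rightarrow> 'a set" where "args F = fst F"
definition att :: "'a af \<Rightarrow> ('a \<times> 'a) set" where "att F = snd F"

definition wf_af :: "'a af \<Rightarrow> bool" where
  "wf_af F \<longleftrightarrow> att F \<subseteq> args F \<times> args F"

definition restrict :: "'a af \<Rightarrow> 'a set \<Rightarrow> 'a af" where
  "restrict F B = (args F \<inter> B, att F \<inter> (B \<times> B))"

definition conflict_free :: "'a af \<Rightarrow> 'a set \<Rightarrow> bool" where
  "conflict_free F S \<longleftrightarrow> S \<subseteq> args F \<and> (\<forall>a\<in>S. \<forall>b\<in>S. (a, b) \<notin> att F)"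

definition range_plus :: "'a af \<Rightarrow> 'a set \<Rightarrow> 'a set" where
  "range_plus F S = S \<union> {x. \<exists>y\<in>S. (y, x) \<in> att F}"

definition stage_ext :: "'a af \<Rightarrow> 'a set \<Rightarrow> bool" where
  "stage_ext F S \<longleftrightarrow> conflict_free F S \<and>
     \<not> (\<exists>T. conflict_free F T \<and> range_plus F S \<subset> range_plus F T)"

definition path_in :: "'a af \<Rightarrow> 'a set \<Rightarrow> 'a \<Rightarrow> 'a \<Rightarrow> bool" where
  "path_in F B a b \<longleftrightarrow> a \<in> args (restrict F B) \<and> b \<in> args (restrict F B) \<and>
     (a, b) \<in> (att (restrict F B))\<^sup>*"

text \<open>Strongly connected component of a in F|_B (empty if a is not an argument of F|_B).\<close>
definition comp_in :: "'a af \<Rightarrow> 'a set \<Rightarrow> 'a \<Rightarrow> 'a set" where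
  "comp_in F B a = {b. path_in F B a b \<and> path_in F B b a}"

definition SCC :: "'a af \<Rightarrow> 'a \<Rightarrow> 'a set" where
  "SCC F a = comp_in F (args F) a"

definition D_S :: "'a af \<Rightarrow> 'a set \<Rightarrow> 'a set \<Rightarrow> 'a set" where
  "D_S F S X = {b\<in>X. \<exists>a\<in>S - X. (a, b) \<in> att F}"

definition C_step :: "'a af \<Rightarrow> 'a set \<Rightarrow> 'a \<Rightarrow> 'a set \<Rightarrow> 'a set" where
  "C_step F S a X = comp_in F (X - D_S F S X) a"

text \<open>The set of all members C^alpha_S(a) of the transfinite sequence, generated
  inductively: C^0, successor steps, and limit steps (component of a in the
  intersection of a nonempty family of earlier members).\<close>
inductive_set C_stages :: "'a af \<Rightarrow> 'a set \<Rightarrow> 'a \<Rightarrow> 'a set set"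
  for F :: "'a af" and S :: "'a set" and a :: 'a where
  C_zero: "SCC F a \<in> C_stages F S a"
| C_succ: "X \<in> C_stages F S a \<Longrightarrow> C_step F S a X \<in> C_stages F S a"
| C_lim: "\<forall>Y\<in>M. Y \<in> C_stages F S a \<Longrightarrow> M \<noteq> {} \<Longrightarrow> comp_in F (\<Inter>M) a \<in> C_stages F S a"

text \<open>tfstg2: the final member C^{alpha_S(a)}_S(a) is the member X with
  a \<notin> X or C_step X = X; the condition is required whenever a \<in> X.\<close>
definition tfstg2 :: "'a af \<Rightarrow> 'a set \<Rightarrow> bool" where
  "tfstg2 F S \<longleftrightarrow> conflict_free F S \<and>
     (\<forall>a\<in>args F. \<forall>X\<in>C_stages F S a.
        a \<in> X \<and> C_step F S a X = X \<longrightarrow> stage_ext (restrict F X) (S \<inter> X))"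

definition Delta_op :: "'a af \<Rightarrow> 'a set \<Rightarrow> 'a set \<Rightarrow> 'a set" where
  "Delta_op F S D = {a\<in>args F. \<exists>b\<in>S. (b, a) \<in> att F \<and> \<not> path_in F (args F - D) a b}"

definition Delta :: "'a af \<Rightarrow> 'a set \<Rightarrow> 'a set" where
  "Delta F S = lfp (Delta_op F S)"

definition scc_split :: "'a af \<Rightarrow> 'a af" where
  "scc_split G = (args G, {(x, y) \<in> att G. y \<in> SCC G x})"

end

theory Submission
  imports Defs
begin

text \<open>
  Write K(a) for the strongly connected component of a in F minus Delta. For a outside Delta,
  K(a) is contained in every stage: an argument of K(a) attacked by S from outside the current
  stage either reaches its attacker inside F minus Delta, which would put the attacker into K(a),
  or else belongs to Delta itself. Conversely, Delta is disjoint from every strongly connected set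
  that S does not attack from outside, so a stationary stage containing a lies in F minus Delta and
  therefore equals K(a); the component of a in the intersection of all stages is such a stage.
  Hence tfstg2 demands exactly that S be a stage extension on every component K(a). Finally,
  conflict-freeness and the range of [[G]] decompose along the strongly connected components
  of G, so the stage extensions of [[G]] are exactly the sets that are stage extensions on each
  component.
\<close>

lemma args_restrict: "args (restrict F B) = args F \<inter> B"
  by (simp add: restrict_def args_def)

lemma att_restrict: "(a, b) \<in> att (restrict F B) \<longleftrightarrow> (a, b) \<in> att F \<and> a \<in> B \<and> b \<in> B"
  by (simp add: restrict_def att_def)

lemma restrict_restrict: "restrict (restrict F B) C = restrict F (B \<inter> C)"
  by (auto simp: restrict_def args_def att_def)

lemma path_in_iff:
  "path_in F B a b \<longleftrightarrow>
     a \<in> args F \<inter> B \<and> b \<in> args F \<inter> B \<and> (a, b) \<in> (att F \<inter> B \<times> B)\<^sup>*"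
  by (auto simp: path_in_def restrict_def args_def att_def)

lemma path_in_refl: "a \<in> args F \<Longrightarrow> a \<in> B \<Longrightarrow> path_in F B a a"
  by (simp add: path_in_iff)

lemma path_in_edge:
  "(a, b) \<in> att F \<Longrightarrow> a \<in> args F \<inter> B \<Longrightarrow> b \<in> args F \<inter> B \<Longrightarrow> path_in F B a b"
  by (auto simp: path_in_iff)

lemma path_in_trans: "path_in F B a b \<Longrightarrow> path_in F B b c \<Longrightarrow> path_in F B a c"
  unfolding path_in_iff by (meson rtrancl_trans)

lemma path_in_mono:
  assumes "B \<subseteq> B'" "path_in F B a b"
  shows "path_in F B' a b"
proof -
  have "(att F \<inter> B \<times> B)\<^sup>* \<subseteq> (att F \<inter> B' \<times> B')\<^sup>*"
    using assms(1) by (intro rtrancl_mono) blast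
  then show ?thesis
    using assms unfolding path_in_iff by blast
qed

lemma path_in_restrict: "path_in (restrict F B) B' a b \<longleftrightarrow> path_in F (B \<inter> B') a b"
proof -
  have "att (restrict F B) \<inter> B' \<times> B' = att F \<inter> (B \<inter> B') \<times> (B \<inter> B')"
    by (auto simp: restrict_def att_def)
  then show ?thesis
    unfolding path_in_iff by (auto simp: restrict_def args_def)
qed

lemma mem_comp_in_iff: "b \<in> comp_in F B a \<longleftrightarrow> path_in F B a b \<and> path_in F B b a"
  by (simp add: comp_in_def)

lemma comp_in_subset: "comp_in F B a \<subseteq> args F \<inter> B"
  by (auto simp: comp_in_def path_in_iff)

lemma self_mem_comp_in: "a \<in> args F \<Longrightarrow> a \<in> B \<Longrightarrow> a \<in> comp_in F B a"
  by (simp add: mem_comp_in_iff path_in_refl)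

lemma comp_in_eq: "b \<in> comp_in F B a \<Longrightarrow> comp_in F B b = comp_in F B a"
  unfolding comp_in_def by (blast intro: path_in_trans)

lemma comp_in_mono: "B \<subseteq> B' \<Longrightarrow> comp_in F B a \<subseteq> comp_in F B' a"
  unfolding comp_in_def by (blast intro: path_in_mono)

lemma comp_in_restrict: "comp_in (restrict F B) B' a = comp_in F (B \<inter> B') a"
  by (simp add: comp_in_def path_in_restrict)

lemma path_in_through_comp_in:
  assumes "x \<in> comp_in F B a" "y \<in> comp_in F B a" "path_in F B x z" "path_in F B z y"
  shows "z \<in> comp_in F B a"
  using assms unfolding comp_in_def by (blast intro: path_in_trans)

definition strongly_connected :: "'a af \<Rightarrow> 'a set \<Rightarrow> bool" where
  "strongly_connected F X \<longleftrightarrow> (\<forall>x\<in>X. \<forall>y\<in>X. path_in F X x y)"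

lemma strongly_connected_subset_args: "strongly_connected F X \<Longrightarrow> X \<subseteq> args F"
  unfolding strongly_connected_def path_in_iff by blast

lemma strongly_connected_comp_in:
  assumes wf: "wf_af F"
  shows "strongly_connected F (comp_in F B a)"
  unfolding strongly_connected_def
proof (intro ballI)
  let ?C = "comp_in F B a" and ?R = "att F \<inter> B \<times> B"
  fix x y assume x: "x \<in> ?C" and y: "y \<in> ?C"
  \<comment> \<open>every argument on a path from x to y inside B lies in the component\<close>
  have "(x, z) \<in> (att F \<inter> ?C \<times> ?C)\<^sup>*" if "(x, z) \<in> ?R\<^sup>*" "path_in F B z y" for z
    using that
  proof (induction rule: rtrancl_induct)
    case base
    then show ?case by simp
  next
    case (step u z)
    have uz: "path_in F B u z"
      using step.hyps(2) wf by (auto simp: wf_af_def intro: path_in_edge)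
    have xu: "path_in F B x u"
      using x step.hyps(1) uz comp_in_subset[of F B a] by (auto simp: path_in_iff)
    have "u \<in> ?C"
      using path_in_through_comp_in[OF x y xu path_in_trans[OF uz step.prems]] .
    moreover have "z \<in> ?C"
      using path_in_through_comp_in[OF x y path_in_trans[OF xu uz] step.prems] .
    moreover have "(x, u) \<in> (att F \<inter> ?C \<times> ?C)\<^sup>*"
      using step.IH path_in_trans[OF uz step.prems] .
    ultimately show ?case
      using step.hyps(2) by (simp add: rtrancl_into_rtrancl)
  qed
  moreover have "path_in F B x y"
    using x y by (meson mem_comp_in_iff path_in_trans)
  ultimately show "path_in F ?C x y"
    using x y comp_in_subset by (auto simp: path_in_iff)
qed

lemma strongly_connected_subset_comp_in:
  "strongly_connected F X \<Longrightarrow> a \<in> X \<Longrightarrow> X \<subseteq> B \<Longrightarrow> X \<subseteq> comp_in F B a"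
  unfolding strongly_connected_def comp_in_def by (blast intro: path_in_mono)

lemma comp_in_subset_comp_in:
  assumes wf: "wf_af F" and sub: "comp_in F B a \<subseteq> B'"
  shows "comp_in F B a \<subseteq> comp_in F B' a"
proof (cases "a \<in> comp_in F B a")
  case True
  show ?thesis
    using strongly_connected_subset_comp_in[OF strongly_connected_comp_in[OF wf] True sub] .
next
  case False
  then have "comp_in F B a = {}"
    unfolding comp_in_def path_in_iff by (blast intro: self_mem_comp_in)
  then show ?thesis
    by simp
qed

lemma mono_Delta_op: "mono (Delta_op F S)"
proof (rule monoI)
  fix D D' :: "'a set" assume "D \<subseteq> D'"
  then have "path_in F (args F - D') x b \<Longrightarrow> path_in F (args F - D) x b" for x b
    by (blast intro: path_in_mono)
  then show "Delta_op F S D \<subseteq> Delta_op F S D'"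
    unfolding Delta_op_def by blast
qed

lemma Delta_unfold: "Delta F S = Delta_op F S (Delta F S)"
  unfolding Delta_def using mono_Delta_op by (rule lfp_unfold)

lemma Delta_attacked: "x \<in> Delta F S \<Longrightarrow> \<exists>b\<in>S. (b, x) \<in> att F"
  by (subst (asm) Delta_unfold) (auto simp: Delta_op_def)

lemma conflict_free_Int_Delta:
  assumes "conflict_free F S"
  shows "S \<inter> Delta F S = {}"
proof -
  have "x \<notin> Delta F S" if "x \<in> S" for x
    using Delta_attacked[of x F S] assms that unfolding conflict_free_def by blast
  then show ?thesis
    by blast
qed

lemma strongly_connected_Int_Delta:
  assumes sc: "strongly_connected F X" and unattacked: "X \<inter> D_S F S X = {}"
  shows "Delta F S \<inter> X = {}"
proof -
  have XA: "X \<subseteq> args F"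
    using sc by (rule strongly_connected_subset_args)
  have "lfp (Delta_op F S) \<subseteq> - X"
  proof (rule lfp_induct[OF mono_Delta_op], rule subsetI, rule ComplI)
    fix x assume x: "x \<in> Delta_op F S (lfp (Delta_op F S) \<inter> - X)" and xX: "x \<in> X"
    then obtain b where b: "b \<in> S" "(b, x) \<in> att F"
      and no_path: "\<not> path_in F (args F - lfp (Delta_op F S) \<inter> - X) x b"
      unfolding Delta_op_def by auto
    show False
    proof (cases "b \<in> X")
      case True
      then have "path_in F X x b"
        using sc xX by (simp add: strongly_connected_def)
      then show False
        using no_path XA by (blast intro: path_in_mono)
    next
      case False
      then show False
        using unattacked xX b by (auto simp: D_S_def)
    qed
  qed
  then show ?thesis
    unfolding Delta_def by blast
qed

lemma C_step_subset: "C_step F S a X \<subseteq> X"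
  unfolding C_step_def using comp_in_subset[of F "X - D_S F S X" a] by blast

lemma comp_in_Delta_Int_D_S:
  assumes "comp_in F (args F - Delta F S) a \<subseteq> X"
  shows "comp_in F (args F - Delta F S) a \<inter> D_S F S X = {}"
proof (rule ccontr)
  let ?B = "args F - Delta F S"
  assume "comp_in F ?B a \<inter> D_S F S X \<noteq> {}"
  then obtain x b where x: "x \<in> comp_in F ?B a"
    and b: "b \<in> S" "b \<notin> X" "(b, x) \<in> att F"
    unfolding D_S_def by blast
  have xB: "x \<in> args F \<inter> ?B"
    using x comp_in_subset[of F ?B a] by blast
  show False
  proof (cases "path_in F ?B x b")
    case True
    then have "b \<in> args F \<inter> ?B"
      unfolding path_in_iff by blast
    then have "path_in F ?B b x"
      using path_in_edge[OF b(3) _ xB] by blast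
    then have "b \<in> comp_in F ?B a"
      using path_in_through_comp_in[OF x x True] by blast
    then show False
      using assms b(2) by blast
  next
    case False
    then have "x \<in> Delta_op F S (Delta F S)"
      using xB b unfolding Delta_op_def by blast
    then have "x \<in> Delta F S"
      by (subst Delta_unfold)
    then show False
      using xB by blast
  qed
qed

lemma comp_in_Delta_subset_C_stages:
  assumes wf: "wf_af F" and a: "a \<in> args F - Delta F S" and Y: "Y \<in> C_stages F S a"
  shows "comp_in F (args F - Delta F S) a \<subseteq> Y"
proof -
  let ?K = "comp_in F (args F - Delta F S) a"
  from Y show ?thesis
  proof (induction rule: C_stages.induct)
    case C_zero
    show ?case
      unfolding SCC_def by (rule comp_in_mono) blast
  next
    case (C_succ X)
    then have "?K \<subseteq> X - D_S F S X"
      using comp_in_Delta_Int_D_S[OF C_succ.IH] by blast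
    then show ?case
      unfolding C_step_def by (rule comp_in_subset_comp_in[OF wf])
  next
    case (C_lim M)
    then have "?K \<subseteq> \<Inter>M"
      by blast
    then show ?case
      by (rule comp_in_subset_comp_in[OF wf])
  qed
qed

lemma C_step_fixed_subset_comp_in_Delta:
  assumes wf: "wf_af F" and fixed: "C_step F S a X = X" and a: "a \<in> X"
  shows "X \<subseteq> comp_in F (args F - Delta F S) a"
proof -
  have X: "comp_in F (X - D_S F S X) a = X"
    using fixed by (simp add: C_step_def)
  have sc: "strongly_connected F X"
    using strongly_connected_comp_in[OF wf, of "X - D_S F S X" a] unfolding X .
  have "X \<subseteq> args F \<inter> (X - D_S F S X)"
    using comp_in_subset[of F "X - D_S F S X" a] unfolding X .
  then have "X \<subseteq> args F - Delta F S"
    using strongly_connected_Int_Delta[OF sc, of S] by blast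
  then show ?thesis
    using strongly_connected_subset_comp_in[OF sc a] by blast
qed

lemma C_stages_fixed_eq_comp_in_Delta:
  assumes wf: "wf_af F" and X: "X \<in> C_stages F S a"
    and fixed: "C_step F S a X = X" and a: "a \<in> X"
  shows "a \<in> args F - Delta F S" "X = comp_in F (args F - Delta F S) a"
proof -
  have sub: "X \<subseteq> comp_in F (args F - Delta F S) a"
    using C_step_fixed_subset_comp_in_Delta[OF wf fixed a] .
  then show a': "a \<in> args F - Delta F S"
    using a comp_in_subset[of F "args F - Delta F S" a] by blast
  show "X = comp_in F (args F - Delta F S) a"
    using sub comp_in_Delta_subset_C_stages[OF wf a' X] by (rule subset_antisym)
qed

lemma ex_fixed_C_stages:
  assumes wf: "wf_af F" and a: "a \<in> args F - Delta F S"
  shows "\<exists>X\<in>C_stages F S a. a \<in> X \<and> C_step F S a X = X"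
proof -
  let ?K = "comp_in F (args F - Delta F S) a"
  \<comment> \<open>the component of a in the intersection of all stages is a stage and is stationary\<close>
  let ?I = "\<Inter>(C_stages F S a)"
  have "C_stages F S a \<noteq> {}"
    using C_stages.C_zero[of F a S] by blast
  then have X: "comp_in F ?I a \<in> C_stages F S a"
    by (blast intro: C_stages.C_lim)
  have aK: "a \<in> ?K"
    using a by (blast intro: self_mem_comp_in)
  have "?K \<subseteq> ?I"
    using comp_in_Delta_subset_C_stages[OF wf a] by blast
  then have "?K \<subseteq> comp_in F ?I a"
    by (rule comp_in_subset_comp_in[OF wf])
  then have "a \<in> comp_in F ?I a"
    using aK by blast
  moreover have "C_step F S a (comp_in F ?I a) = comp_in F ?I a"
  proof (rule subset_antisym)
    show "C_step F S a (comp_in F ?I a) \<subseteq> comp_in F ?I a"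
      by (rule C_step_subset)
    have "?I \<subseteq> C_step F S a (comp_in F ?I a)"
      using C_stages.C_succ[OF X] by (rule Inter_lower)
    then show "comp_in F ?I a \<subseteq> C_step F S a (comp_in F ?I a)"
      using comp_in_subset[of F ?I a] by blast
  qed
  ultimately show ?thesis
    using X by blast
qed

lemma tfstg2_iff_comp_in_Delta:
  assumes wf: "wf_af F"
  shows "tfstg2 F S \<longleftrightarrow> conflict_free F S \<and>
    (\<forall>a\<in>args F - Delta F S. stage_ext (restrict F (comp_in F (args F - Delta F S) a))
        (S \<inter> comp_in F (args F - Delta F S) a))"
proof -
  let ?K = "comp_in F (args F - Delta F S)"
  let ?stage = "\<lambda>X. stage_ext (restrict F X) (S \<inter> X)"
  have "(\<forall>a\<in>args F. \<forall>X\<in>C_stages F S a. a \<in> X \<and> C_step F S a X = X \<longrightarrow> ?stage X)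
    \<longleftrightarrow> (\<forall>a\<in>args F - Delta F S. ?stage (?K a))" (is "?L \<longleftrightarrow> ?R")
  proof
    assume L: ?L
    show ?R
    proof
      fix a assume a: "a \<in> args F - Delta F S"
      then obtain X where X: "X \<in> C_stages F S a" "a \<in> X" "C_step F S a X = X"
        using ex_fixed_C_stages[OF wf] by blast
      then have "X = ?K a"
        using C_stages_fixed_eq_comp_in_Delta(2)[OF wf] by blast
      then show "?stage (?K a)"
        using L a X by blast
    qed
  next
    assume R: ?R
    show ?L
    proof (intro ballI impI)
      fix a X assume "X \<in> C_stages F S a" and "a \<in> X \<and> C_step F S a X = X"
      then have "a \<in> args F - Delta F S" "X = ?K a"
        using C_stages_fixed_eq_comp_in_Delta[OF wf] by blast+
      then show "?stage X"
        using R by blast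
    qed
  qed
  then show ?thesis
    unfolding tfstg2_def by (rule arg_cong)
qed

lemma SCC_restrict: "B \<subseteq> args F \<Longrightarrow> SCC (restrict F B) a = comp_in F B a"
  by (simp add: SCC_def comp_in_restrict args_restrict Int_absorb2)

lemma SCC_subset: "SCC G a \<subseteq> args G"
  using comp_in_subset[of G "args G" a] by (simp add: SCC_def)

lemma self_mem_SCC: "a \<in> args G \<Longrightarrow> a \<in> SCC G a"
  by (simp add: SCC_def self_mem_comp_in)

lemma SCC_eq: "b \<in> SCC G a \<Longrightarrow> SCC G b = SCC G a"
  by (simp add: SCC_def comp_in_eq)

lemma SCC_sym: "b \<in> SCC G a \<Longrightarrow> a \<in> SCC G b"
  by (simp add: SCC_def mem_comp_in_iff)

lemma SCC_eq_or_disjoint: "SCC G a = SCC G b \<or> SCC G a \<inter> SCC G b = {}"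
proof (rule disjCI)
  assume "SCC G a \<inter> SCC G b \<noteq> {}"
  then obtain c where "c \<in> SCC G a" "c \<in> SCC G b"
    by blast
  then show "SCC G a = SCC G b"
    using SCC_eq by metis
qed

lemma mem_SCC_swap: "b \<in> SCC G a \<Longrightarrow> b \<in> SCC G c \<longleftrightarrow> c \<in> SCC G a"
  by (metis SCC_eq SCC_sym)

lemma args_scc_split: "args (scc_split G) = args G"
  by (simp add: scc_split_def args_def)

lemma att_scc_split: "(a, b) \<in> att (scc_split G) \<longleftrightarrow> (a, b) \<in> att G \<and> b \<in> SCC G a"
  by (simp add: scc_split_def att_def)

lemma att_scc_split_iff_att_restrict_SCC:
  assumes "a \<in> args G"
  shows "(a, b) \<in> att (scc_split G) \<longleftrightarrow> (\<exists>x\<in>args G. (a, b) \<in> att (restrict G (SCC G x)))"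
proof
  assume "(a, b) \<in> att (scc_split G)"
  then show "\<exists>x\<in>args G. (a, b) \<in> att (restrict G (SCC G x))"
    using assms self_mem_SCC[OF assms] by (auto simp: att_scc_split att_restrict)
next
  assume "\<exists>x\<in>args G. (a, b) \<in> att (restrict G (SCC G x))"
  then obtain x where "(a, b) \<in> att G" "a \<in> SCC G x" "b \<in> SCC G x"
    by (auto simp: att_restrict)
  then show "(a, b) \<in> att (scc_split G)"
    using mem_SCC_swap[of b G x a] by (simp add: att_scc_split)
qed

lemma conflict_free_scc_split_iff:
  "conflict_free (scc_split G) T \<longleftrightarrow>
     T \<subseteq> args G \<and> (\<forall>x\<in>args G. conflict_free (restrict G (SCC G x)) (T \<inter> SCC G x))"
proof
  assume cf: "conflict_free (scc_split G) T"
  then have T: "T \<subseteq> args G"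
    by (simp add: conflict_free_def args_scc_split)
  have "conflict_free (restrict G (SCC G x)) (T \<inter> SCC G x)" if x: "x \<in> args G" for x
    unfolding conflict_free_def args_restrict
  proof (intro conjI ballI)
    show "T \<inter> SCC G x \<subseteq> args G \<inter> SCC G x"
      using T by blast
    fix a b assume "a \<in> T \<inter> SCC G x" "b \<in> T \<inter> SCC G x"
    then show "(a, b) \<notin> att (restrict G (SCC G x))"
      using cf att_scc_split_iff_att_restrict_SCC[of a G b] T x
      unfolding conflict_free_def by blast
  qed
  with T show "T \<subseteq> args G \<and> (\<forall>x\<in>args G. conflict_free (restrict G (SCC G x)) (T \<inter> SCC G x))"
    by blast
next
  assume local: "T \<subseteq> args G \<and> (\<forall>x\<in>args G. conflict_free (restrict G (SCC G x)) (T \<inter> SCC G x))"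
  show "conflict_free (scc_split G) T"
    unfolding conflict_free_def args_scc_split
  proof (intro conjI ballI notI)
    show "T \<subseteq> args G"
      using local by blast
    fix a b assume ab: "a \<in> T" "b \<in> T" "(a, b) \<in> att (scc_split G)"
    then obtain x where x: "x \<in> args G" "(a, b) \<in> att (restrict G (SCC G x))"
      using att_scc_split_iff_att_restrict_SCC[of a G b] local by blast
    then have "a \<in> SCC G x" "b \<in> SCC G x"
      by (simp_all add: att_restrict)
    then show False
      using local x ab unfolding conflict_free_def by blast
  qed
qed

lemma range_plus_scc_split_Int_SCC:
  "range_plus (scc_split G) T \<inter> SCC G x = range_plus (restrict G (SCC G x)) (T \<inter> SCC G x)"
proof -
  have "y \<in> SCC G t \<longleftrightarrow> t \<in> SCC G x" if "y \<in> SCC G x" for y t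
    using mem_SCC_swap[OF that] .
  then show ?thesis
    unfolding range_plus_def att_scc_split att_restrict by blast
qed

lemma range_plus_scc_split_subset: "T \<subseteq> args G \<Longrightarrow> range_plus (scc_split G) T \<subseteq> args G"
  unfolding range_plus_def att_scc_split using SCC_subset[of G] by blast

lemma range_plus_scc_split_subset_iff:
  assumes S: "S \<subseteq> args G"
  shows "range_plus (scc_split G) S \<subseteq> range_plus (scc_split G) T \<longleftrightarrow>
    (\<forall>x\<in>args G. range_plus (restrict G (SCC G x)) (S \<inter> SCC G x)
                \<subseteq> range_plus (restrict G (SCC G x)) (T \<inter> SCC G x))"
  unfolding range_plus_scc_split_Int_SCC[symmetric]
proof (intro iffI ballI subsetI)
  fix y assume local: "\<forall>x\<in>args G. range_plus (scc_split G) S \<inter> SCC G x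
                                \<subseteq> range_plus (scc_split G) T \<inter> SCC G x"
    and y: "y \<in> range_plus (scc_split G) S"
  then have "y \<in> args G"
    using range_plus_scc_split_subset[OF S] by blast
  then have "y \<in> range_plus (scc_split G) S \<inter> SCC G y"
    using y self_mem_SCC[of y G] by blast
  with local \<open>y \<in> args G\<close> show "y \<in> range_plus (scc_split G) T"
    by blast
next
  fix x y
  assume "range_plus (scc_split G) S \<subseteq> range_plus (scc_split G) T"
    and "y \<in> range_plus (scc_split G) S \<inter> SCC G x"
  then show "y \<in> range_plus (scc_split G) T \<inter> SCC G x"
    by blast
qed

lemma stage_ext_restrict_SCC_if_stage_ext_scc_split:
  assumes stage: "stage_ext (scc_split G) S" and x: "x \<in> args G"
  shows "stage_ext (restrict G (SCC G x)) (S \<inter> SCC G x)"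
proof -
  let ?K = "SCC G x" and ?H = "scc_split G"
  have S: "S \<subseteq> args G"
    and cf_S: "\<forall>z\<in>args G. conflict_free (restrict G (SCC G z)) (S \<inter> SCC G z)"
    using stage conflict_free_scc_split_iff unfolding stage_ext_def by blast+
  have "\<not> range_plus (restrict G ?K) (S \<inter> ?K) \<subset> range_plus (restrict G ?K) T'"
    if cf_T': "conflict_free (restrict G ?K) T'" for T'
  proof
    assume lt: "range_plus (restrict G ?K) (S \<inter> ?K) \<subset> range_plus (restrict G ?K) T'"
    have T'K: "T' \<subseteq> ?K"
      using cf_T' by (simp add: conflict_free_def args_restrict)
    define T where "T = (S - ?K) \<union> T'"
    have T: "T \<subseteq> args G"
      using S T'K SCC_subset[of G x] unfolding T_def by blast
    have T_Int: "T \<inter> SCC G z = (if SCC G z = ?K then T' else S \<inter> SCC G z)" for z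
      using SCC_eq_or_disjoint[of G z x] T'K unfolding T_def by auto
    have "conflict_free (restrict G (SCC G z)) (T \<inter> SCC G z)" if "z \<in> args G" for z
      using cf_T' cf_S that by (simp add: T_Int)
    then have "conflict_free ?H T"
      using T conflict_free_scc_split_iff by blast
    moreover have "range_plus ?H S \<subseteq> range_plus ?H T"
      unfolding range_plus_scc_split_subset_iff[OF S]
    proof
      fix z
      show "range_plus (restrict G (SCC G z)) (S \<inter> SCC G z)
          \<subseteq> range_plus (restrict G (SCC G z)) (T \<inter> SCC G z)"
        using lt by (cases "SCC G z = ?K") (simp_all add: T_Int)
    qed
    moreover have "\<not> range_plus ?H T \<subseteq> range_plus ?H S"
      unfolding range_plus_scc_split_subset_iff[OF T] using lt x by (force simp: T_Int)
    ultimately show False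
      using stage unfolding stage_ext_def by blast
  qed
  then show ?thesis
    using cf_S x unfolding stage_ext_def by blast
qed

lemma stage_ext_scc_split_if_stage_ext_restrict_SCC:
  assumes S: "S \<subseteq> args G"
    and local: "\<forall>x\<in>args G. stage_ext (restrict G (SCC G x)) (S \<inter> SCC G x)"
  shows "stage_ext (scc_split G) S"
  unfolding stage_ext_def
proof (intro conjI notI)
  have "\<forall>x\<in>args G. conflict_free (restrict G (SCC G x)) (S \<inter> SCC G x)"
    using local unfolding stage_ext_def by blast
  with S show "conflict_free (scc_split G) S"
    by (simp add: conflict_free_scc_split_iff)
  assume "\<exists>T. conflict_free (scc_split G) T \<and> range_plus (scc_split G) S \<subset> range_plus (scc_split G) T"
  then obtain T where cf_T: "conflict_free (scc_split G) T"
    and lt: "range_plus (scc_split G) S \<subset> range_plus (scc_split G) T"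
    by blast
  have T: "T \<subseteq> args G"
    and cf_T': "\<forall>x\<in>args G. conflict_free (restrict G (SCC G x)) (T \<inter> SCC G x)"
    using cf_T unfolding conflict_free_scc_split_iff by blast+
  have "range_plus (restrict G (SCC G x)) (T \<inter> SCC G x)
      \<subseteq> range_plus (restrict G (SCC G x)) (S \<inter> SCC G x)" if x: "x \<in> args G" for x
  proof -
    have "range_plus (restrict G (SCC G x)) (S \<inter> SCC G x)
        \<subseteq> range_plus (restrict G (SCC G x)) (T \<inter> SCC G x)"
      using lt range_plus_scc_split_subset_iff[OF S] x by blast
    moreover have "\<not> range_plus (restrict G (SCC G x)) (S \<inter> SCC G x)
        \<subset> range_plus (restrict G (SCC G x)) (T \<inter> SCC G x)"
      using local cf_T' x unfolding stage_ext_def by blast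
    ultimately show ?thesis
      by blast
  qed
  then have "range_plus (scc_split G) T \<subseteq> range_plus (scc_split G) S"
    unfolding range_plus_scc_split_subset_iff[OF T] by blast
  then show False
    using lt by blast
qed

lemma stage_ext_scc_split_iff:
  assumes "S \<subseteq> args G"
  shows "stage_ext (scc_split G) S \<longleftrightarrow>
    (\<forall>x\<in>args G. stage_ext (restrict G (SCC G x)) (S \<inter> SCC G x))"
  using stage_ext_restrict_SCC_if_stage_ext_scc_split[of G S]
    stage_ext_scc_split_if_stage_ext_restrict_SCC[OF assms] by blast

theorem theorem9:
  fixes F :: "'a af" and S :: "'a set"
  assumes "wf_af F" and "S \<subseteq> args F"
  shows "tfstg2 F S \<longleftrightarrow>
           conflict_free F S \<and> stage_ext (scc_split (restrict F (args F - Delta F S))) S"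
proof -
  let ?B = "args F - Delta F S"
  have args_B: "args (restrict F ?B) = ?B"
    by (auto simp: args_restrict)
  have SCC_B: "SCC (restrict F ?B) a = comp_in F ?B a" for a
    by (simp add: SCC_restrict)
  have restrict_B: "restrict (restrict F ?B) (comp_in F ?B a) = restrict F (comp_in F ?B a)" for a
    using comp_in_subset[of F ?B a] by (simp add: restrict_restrict Int_absorb1)
  have "stage_ext (scc_split (restrict F ?B)) S \<longleftrightarrow>
      (\<forall>a\<in>?B. stage_ext (restrict F (comp_in F ?B a)) (S \<inter> comp_in F ?B a))"
    if "S \<subseteq> ?B"
    using stage_ext_scc_split_iff[of S "restrict F ?B"] that
    unfolding args_B SCC_B restrict_B by blast
  moreover have "conflict_free F S \<Longrightarrow> S \<subseteq> ?B"
    using assms(2) conflict_free_Int_Delta by blast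
  ultimately show ?thesis
    using tfstg2_iff_comp_in_Delta[OF assms(1)] by blast
qed

end
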